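(* For all integers $v\ge1$ and $0\le n\le v-1$, $$B^{(2v)}_{2n}(v)=(-1)^n(2n)!\,\frac{\Gamma(2v-2n)}{\Gamma(2v)}\,s(v,n)=(-1)^n\,2^{-2n}(2n)!\,c_{2v,n}.$$
   Context: The Nörlund polynomials (higher-order Bernoulli polynomials) $B^{(a)}_n(x)$ are defined by $\left(\frac{t}{e^t-1}\right)^a e^{xt}=\sum_{n\ge0}B^{(a)}_n(x)\frac{t^n}{n!}$. For integers $v\ge1$ and $0\le n\le v-1$, $s(v,n)$ denotes the $n$-th elementary symmetric polynomial evaluated at $1^2,2^2,\dots,(v-1)^2$, with $s(v,0)=1$. The generalized cosecant numbers $c_{\rho,k}$ are the coefficients in $\left(\frac{x}{\sin x}\right)^{\rho}=\sum_{k\ge0}c_{\rho,k}x^{2k}$. *)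

theory Defs
  imports "HOL-Analysis.Analysis" "HOL-Computational_Algebra.Formal_Power_Series"
begin

definition norlund :: "nat \<Rightarrow> nat \<Rightarrow> real \<Rightarrow> real" where
  "norlund a n x = fact n * fps_nth ((fps_X / (fps_exp 1 - 1)) ^ a * fps_exp x) n"

definition esym_sq :: "nat \<Rightarrow> nat \<Rightarrow> real" where
  "esym_sq v n = (\<Sum>S | S \<subseteq> {1..v-1} \<and> card S = n. \<Prod>k\<in>S. (real k)^2)"

definition cosec_num :: "nat \<Rightarrow> nat \<Rightarrow> real" where
  "cosec_num \<rho> k = fps_nth ((fps_X / fps_sin 1) ^ \<rho>) (2 * k)"

end

theory Submission
  imports Defs
begin

(*
  With g = X/(e^X - 1), the Riccati-type identity X g' = g - e^X g^2 yields the recurrence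
  B^(m+2)_(m+1)(x + 1) = x B^(m+1)_m(x), hence B^(N+1)_N(x) = (x - 1)(x - 2)...(x - N).
  For N = 2v - 1 and x = v + y this product is y (y^2 - 1^2)...(y^2 - (v-1)^2), whose
  coefficients are signed values s(v,n); comparing them with the Appell expansion
  B^(a)_N(v + y) = sum_m (N choose m) B^(a)_(N-m)(v) y^m gives the first formula.
  For the second, g(X) e^(X/2) = X/(e^(X/2) - e^(-X/2)) is the series x/sin x at x = iX/2,
  so the substitution turns the even coefficients of its powers into those of (x/sin x)^rho
  times (-1/4)^n.
*)

definition bernoulli_fps :: "real fps" where
  "bernoulli_fps = fps_X / (fps_exp 1 - 1)"

lemma norlund_conv_bernoulli_fps:
  "norlund a n x = fact n * fps_nth (bernoulli_fps ^ a * fps_exp x) n"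
  by (simp add: norlund_def bernoulli_fps_def)

lemma bernoulli_fps_times: "bernoulli_fps * (fps_exp 1 - 1) = fps_X"
proof -
  have "fps_nth (fps_exp (1::real) - 1) 1 \<noteq> 0" by simp
  hence "fps_exp (1::real) - 1 \<noteq> 0" by force
  moreover have "subdegree (fps_exp (1::real) - 1) = 1" by (rule subdegreeI) auto
  ultimately show ?thesis
    unfolding bernoulli_fps_def by (simp add: fps_times_divide_eq)
qed

lemma bernoulli_fps_nth_0: "fps_nth bernoulli_fps 0 = 1"
proof -
  have "fps_nth (bernoulli_fps * (fps_exp 1 - 1)) 1 = 1" by (simp add: bernoulli_fps_times)
  thus ?thesis by (simp add: fps_mult_nth)
qed

lemma bernoulli_fps_deriv:
  "fps_X * fps_deriv bernoulli_fps = bernoulli_fps - fps_exp 1 * bernoulli_fps\<^sup>2"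
proof -
  let ?g = bernoulli_fps and ?E = "fps_exp (1::real) - 1"
  have "fps_deriv (?g * ?E) = 1" by (simp add: bernoulli_fps_times)
  hence "fps_deriv ?g * ?E = 1 - ?g * fps_exp 1" by (simp add: algebra_simps)
  hence "(fps_X * fps_deriv ?g) * ?E = (?g * ?E) * (1 - ?g * fps_exp 1)"
    by (simp add: bernoulli_fps_times mult.assoc)
  also have "\<dots> = (?g - fps_exp 1 * ?g\<^sup>2) * ?E" by (simp add: algebra_simps power2_eq_square)
  finally show ?thesis using bernoulli_fps_times by auto
qed

lemma bernoulli_fps_power_deriv:
  "fps_X * fps_deriv (bernoulli_fps ^ a)
     = of_nat a * (bernoulli_fps ^ a - fps_exp 1 * bernoulli_fps ^ Suc a)"
proof (cases a)
  case (Suc m)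
  have "fps_deriv (bernoulli_fps ^ a) = of_nat a * fps_deriv bernoulli_fps * bernoulli_fps ^ m"
    using fps_deriv_power'[of bernoulli_fps a] Suc by simp
  hence "fps_X * fps_deriv (bernoulli_fps ^ a)
      = of_nat a * bernoulli_fps ^ m * (fps_X * fps_deriv bernoulli_fps)"
    by (simp add: algebra_simps)
  also have "\<dots> = of_nat a * (bernoulli_fps ^ a - fps_exp 1 * bernoulli_fps ^ Suc a)"
    by (simp add: bernoulli_fps_deriv Suc algebra_simps power2_eq_square)
  finally show ?thesis .
qed simp

lemma norlund_recurrence:
  "norlund (Suc (Suc m)) (Suc m) (x + 1) = x * norlund (Suc m) m x"
proof -
  define a where "a = Suc m"
  define W where "W = bernoulli_fps ^ a * fps_exp x"
  define V where "V = bernoulli_fps ^ Suc a * fps_exp (x + 1)"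
  have "fps_X * fps_deriv W
      = fps_X * fps_deriv (bernoulli_fps ^ a) * fps_exp x + fps_const x * (fps_X * W)"
    by (simp add: W_def algebra_simps)
  also have "\<dots> = of_nat a * W - of_nat a * V + fps_const x * (fps_X * W)"
    by (simp add: bernoulli_fps_power_deriv W_def V_def fps_exp_add_mult algebra_simps)
  finally have "fps_nth (fps_X * fps_deriv W) a
      = fps_nth (of_nat a * W - of_nat a * V + fps_const x * (fps_X * W)) a"
    by simp
  hence "real a * fps_nth V a = x * fps_nth W m"
    by (simp add: a_def fps_of_nat[symmetric] del: of_nat_Suc)
  thus ?thesis
    by (simp add: norlund_conv_bernoulli_fps V_def W_def a_def)
qed

lemma norlund_diagonal: "norlund (Suc m) m x = (\<Prod>j<m. x - real (Suc j))"
proof (induction m arbitrary: x)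
  case 0
  show ?case by (simp add: norlund_conv_bernoulli_fps bernoulli_fps_nth_0)
next
  case (Suc m)
  have "norlund (Suc (Suc m)) (Suc m) x = (x - 1) * norlund (Suc m) m (x - 1)"
    using norlund_recurrence[of m "x - 1"] by simp
  also have "\<dots> = (\<Prod>j<Suc m. x - real (Suc j))"
    by (simp only: Suc.IH prod.lessThan_Suc_shift) (simp add: algebra_simps)
  finally show ?case .
qed

lemma norlund_add:
  "norlund a N (x + y) = (\<Sum>m\<le>N. real (N choose m) * norlund a (N - m) x * y ^ m)"
proof -
  have "bernoulli_fps ^ a * fps_exp (x + y) = fps_exp y * (bernoulli_fps ^ a * fps_exp x)"
    by (simp add: fps_exp_add_mult algebra_simps)
  hence "norlund a N (x + y) = fact N * fps_nth (fps_exp y * (bernoulli_fps ^ a * fps_exp x)) N"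
    by (simp only: norlund_conv_bernoulli_fps)
  also have "\<dots> = fact N * (\<Sum>m\<le>N. y ^ m / fact m * fps_nth (bernoulli_fps ^ a * fps_exp x) (N - m))"
    by (simp only: fps_mult_nth fps_exp_nth of_nat_fact atLeast0AtMost)
  also have "\<dots> = (\<Sum>m\<le>N. real (N choose m) * norlund a (N - m) x * y ^ m)"
    unfolding sum_distrib_left
    by (intro sum.cong) (simp_all add: binomial_fact norlund_conv_bernoulli_fps)
  finally show ?thesis .
qed

lemma prod_centered_linear_factors:
  "(\<Prod>j<2*w+1. real (Suc w) + y - real (Suc j)) = y * (\<Prod>j<w. y^2 - real (Suc j)^2)"
proof (induction w)
  case (Suc w)
  have "(\<Prod>j<2*Suc w+1. real (Suc (Suc w)) + y - real (Suc j))
      = (real (Suc w) + y) * (\<Prod>j<Suc (2*w+1). real (Suc (Suc w)) + y - real (Suc (Suc j)))"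
    by (simp only: prod.lessThan_Suc_shift mult_2 add_Suc add_Suc_right) simp
  also have "(\<Prod>j<Suc (2*w+1). real (Suc (Suc w)) + y - real (Suc (Suc j)))
      = (\<Prod>j<2*w+1. real (Suc w) + y - real (Suc j)) * (y - real (Suc w))"
    by (simp add: algebra_simps)
  also note Suc.IH
  finally show ?case by (simp add: algebra_simps power2_eq_square)
qed simp

lemma prod_diff_squares_eq_esym_sq:
  "(\<Prod>j<w. y^2 - real (Suc j)^2) = (\<Sum>n\<le>w. (-1)^n * esym_sq (Suc w) n * y^(2*(w-n)))"
proof -
  let ?sq = "\<lambda>X. \<Prod>j\<in>X. (real j)^2"
  have "(\<Prod>j<w. y^2 - real (Suc j)^2) = (\<Prod>j\<in>{1..w}. - ((real j)^2) + y^2)"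
    by (simp add: prod.atLeast1_atMost_eq)
  also have "\<dots> = (\<Sum>X\<in>Pow {1..w}. (\<Prod>j\<in>X. - ((real j)^2)) * (\<Prod>j\<in>{1..w}-X. y^2))"
    by (rule prod_add) simp
  also have "\<dots> = (\<Sum>X\<in>Pow {1..w}. (-1)^card X * ?sq X * y^(2*(w - card X)))"
  proof (rule sum.cong[OF refl])
    fix X assume "X \<in> Pow {1..w}"
    hence "card ({1..w} - X) = w - card X" by (auto simp: card_Diff_subset finite_subset)
    thus "(\<Prod>j\<in>X. - ((real j)^2)) * (\<Prod>j\<in>{1..w}-X. y^2) = (-1)^card X * ?sq X * y^(2*(w - card X))"
      by (simp add: prod_uminus power_mult[symmetric] mult.commute)
  qed
  also have "\<dots> = (\<Sum>n\<le>w. \<Sum>X | X \<in> Pow {1..w} \<and> card X = n. (-1)^card X * ?sq X * y^(2*(w - card X)))"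
    by (rule sum.group[symmetric]) (auto intro: card_mono[of "{1..w}", simplified])
  also have "\<dots> = (\<Sum>n\<le>w. (-1)^n * esym_sq (Suc w) n * y^(2*(w-n)))"
  proof (rule sum.cong[OF refl])
    fix n
    have "{X. X \<in> Pow {1..w} \<and> card X = n} = {S. S \<subseteq> {1..Suc w - 1} \<and> card S = n}" by auto
    thus "(\<Sum>X | X \<in> Pow {1..w} \<and> card X = n. (-1)^card X * ?sq X * y^(2*(w - card X)))
        = (-1)^n * esym_sq (Suc w) n * y^(2*(w-n))"
      by (simp add: esym_sq_def sum_distrib_left sum_distrib_right mult_ac)
  qed
  finally show ?thesis .
qed

lemma sum_odd_powers_reindex:
  "(\<Sum>n\<le>w. c n * (y::'a::comm_semiring_1)^(2*(w-n)+1))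
     = (\<Sum>m\<le>2*w+1. (if odd m then c ((2*w+1-m) div 2) else 0) * y^m)"
proof (induction w arbitrary: c)
  case (Suc w)
  have "(\<Sum>n\<le>Suc w. c n * y^(2*(Suc w-n)+1))
      = c 0 * y^(2*w+3) + (\<Sum>n\<le>w. c (Suc n) * y^(2*(w-n)+1))"
    by (simp only: sum.atMost_Suc_shift diff_Suc_Suc) (simp add: numeral_3_eq_3)
  also have "(\<Sum>n\<le>w. c (Suc n) * y^(2*(w-n)+1))
      = (\<Sum>m\<le>2*w+1. (if odd m then c ((2*Suc w+1-m) div 2) else 0) * y^m)"
    unfolding Suc.IH by (intro sum.cong) (auto simp: Suc_diff_le)
  finally show ?case by (simp add: numeral_3_eq_3 sum.atMost_Suc add_ac)
qed simp

lemma norlund_central_esym_sq: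
  assumes "n \<le> w"
  shows "real (2*w+1 choose 2*n) * norlund (2 * Suc w) (2*n) (real (Suc w))
           = (-1)^n * esym_sq (Suc w) n"
proof -
  define N where "N = 2*w+1"
  define d where "d m = (if odd m then (-1)^((N-m) div 2) * esym_sq (Suc w) ((N-m) div 2) else 0)"
    for m
  have "\<forall>y. (\<Sum>m\<le>N. real (N choose m) * norlund (Suc N) (N - m) (real (Suc w)) * y^m)
      = (\<Sum>m\<le>N. d m * y^m)" (is "\<forall>y. ?B y = ?D y")
  proof
    fix y :: real
    have "?B y = (\<Prod>j<2*w+1. real (Suc w) + y - real (Suc j))"
      by (simp add: norlund_add[symmetric] norlund_diagonal N_def)
    also have "\<dots> = (\<Sum>n\<le>w. ((-1)^n * esym_sq (Suc w) n) * y^(2*(w-n)+1))"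
      unfolding prod_centered_linear_factors prod_diff_squares_eq_esym_sq
      by (simp add: sum_distrib_left mult_ac)
    also have "\<dots> = (\<Sum>m\<le>N. d m * y^m)"
      unfolding N_def d_def by (rule sum_odd_powers_reindex)
    finally show "?B y = ?D y" .
  qed
  hence "real (N choose (N - 2*n)) * norlund (Suc N) (N - (N - 2*n)) (real (Suc w)) = d (N - 2*n)"
    unfolding polyfun_eq_coeffs by simp
  moreover have "N - (N - 2*n) = 2*n" "odd (N - 2*n)" "(N - (N - 2*n)) div 2 = n"
    using assms by (auto simp: N_def)
  ultimately show ?thesis
    using assms binomial_symmetric[of "2*n" N] by (simp add: d_def N_def)
qed

lemma Gamma_quotient_conv_binomial:
  assumes "k \<le> m"
  shows "Gamma (real (Suc m - k)) / Gamma (real (Suc m)) = 1 / (real (m choose k) * fact k)"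
proof -
  have "Gamma (real (Suc m - k)) = fact (m - k)" "Gamma (real (Suc m)) = fact m"
    using assms Gamma_fact[of "m - k"] Gamma_fact[of m] by (simp_all add: Suc_diff_le add.commute)
  thus ?thesis using assms by (simp add: binomial_fact)
qed

definition bernoulli_half_fps :: "real fps" where
  "bernoulli_half_fps = bernoulli_fps * fps_exp (1/2)"

lemma bernoulli_half_fps_times: "bernoulli_half_fps * (fps_exp (1/2) - fps_exp (-1/2)) = fps_X"
proof -
  have "bernoulli_half_fps * (fps_exp (1/2) - fps_exp (-1/2))
      = bernoulli_fps * (fps_exp (1/2) * fps_exp (1/2) - fps_exp (1/2) * fps_exp (-1/2))"
    by (simp add: bernoulli_half_fps_def algebra_simps)
  also have "\<dots> = bernoulli_fps * (fps_exp 1 - 1)"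
    by (simp flip: fps_exp_add_mult)
  finally show ?thesis by (simp add: bernoulli_fps_times)
qed

lemma norlund_half: "norlund a N (real a / 2) = fact N * fps_nth (bernoulli_half_fps ^ a) N"
  by (simp add: norlund_conv_bernoulli_fps bernoulli_half_fps_def power_mult_distrib
      fps_exp_power_mult)

definition fps_of_real :: "real fps \<Rightarrow> 'a::real_field fps" where
  "fps_of_real f = Abs_fps (\<lambda>n. of_real (fps_nth f n))"

lemma fps_of_real_nth [simp]: "fps_nth (fps_of_real f) n = of_real (fps_nth f n)"
  by (simp add: fps_of_real_def)

lemma fps_of_real_mult: "fps_of_real (f * g) = fps_of_real f * fps_of_real g"
  by (rule fps_ext) (simp add: fps_mult_nth)

lemma fps_of_real_power: "fps_of_real (f ^ n) = fps_of_real f ^ n"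
proof (induction n)
  case 0
  show ?case by (rule fps_ext) simp
qed (simp add: fps_of_real_mult)

lemma fps_of_real_X [simp]: "fps_of_real fps_X = fps_X"
  by (rule fps_ext) (simp add: fps_X_def)

lemma fps_of_real_diff [simp]: "fps_of_real (f - g) = fps_of_real f - fps_of_real g"
  by (rule fps_ext) simp

lemma fps_of_real_exp [simp]: "fps_of_real (fps_exp r) = fps_exp (of_real r)"
  by (rule fps_ext) simp

lemma fps_of_real_sin [simp]: "fps_of_real (fps_sin r) = fps_sin (of_real r)"
  by (rule fps_ext) (simp add: fps_sin_def)

lemma fps_sin_compose_linear:
  "fps_sin c oo (fps_const d * fps_X) = fps_sin (d * c)"
  by (rule fps_ext) (simp add: fps_sin_def power_mult_distrib)

lemma fps_sin_ii_half:
  "fps_sin (\<i>/2) = fps_const (\<i>/2) * (fps_exp (1/2) - fps_exp (-1/2))"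
proof -
  have "fps_sin (\<i>/2) = (fps_exp (-1/2) - fps_exp (1/2)) / fps_const (2*\<i>)"
    using fps_sin_fps_exp_ii[of "\<i>/2"] by simp
  also have "\<dots> = (fps_exp (-1/2) - fps_exp (1/2)) * fps_const (inverse (2*\<i>))"
    by (simp add: fps_divide_unit fps_const_inverse)
  also have "inverse (2*\<i>) = - (\<i>/2)" by (simp add: field_simps)
  also have "(fps_exp (-1/2) - fps_exp (1/2)) * fps_const (- (\<i>/2))
      = fps_const (\<i>/2) * (fps_exp (1/2) - fps_exp (-1/2::complex))"
    by (rule fps_ext) (simp add: algebra_simps)
  finally show ?thesis .
qed

lemma cosecant_fps_compose_ii_half:
  "fps_of_real (fps_X / fps_sin 1) oo (fps_const (\<i>/2) * fps_X) = fps_of_real bernoulli_half_fps"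
proof -
  let ?L = "fps_const (\<i>/2) * fps_X" and ?D = "fps_exp (1/2) - fps_exp (-1/2::complex)"
  have "fps_nth (fps_sin (1::real)) 1 \<noteq> 0" by simp
  hence "fps_sin (1::real) \<noteq> 0" by force
  moreover have "subdegree (fps_sin (1::real)) = 1" by (rule subdegreeI) auto
  ultimately have "fps_X / fps_sin 1 * fps_sin 1 = (fps_X :: real fps)"
    by (simp add: fps_times_divide_eq)
  hence "fps_of_real (fps_X / fps_sin 1) * fps_sin 1 = (fps_X :: complex fps)"
    by (metis fps_of_real_mult fps_of_real_sin fps_of_real_X of_real_1)
  hence "(fps_of_real (fps_X / fps_sin 1) oo ?L) * (fps_sin 1 oo ?L) = ?L"
    by (simp flip: fps_compose_mult_distrib)
  moreover have "fps_sin 1 oo ?L = fps_const (\<i>/2) * ?D"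
    using fps_sin_compose_linear[of 1 "\<i>/2"] by (simp add: fps_sin_ii_half)
  ultimately have "fps_const (\<i>/2) * ((fps_of_real (fps_X / fps_sin 1) oo ?L) * ?D)
      = fps_const (\<i>/2) * fps_X"
    by (metis mult.left_commute)
  moreover have "fps_of_real bernoulli_half_fps * ?D = fps_X"
    using arg_cong[OF bernoulli_half_fps_times, of fps_of_real] by (simp add: fps_of_real_mult)
  ultimately have "(fps_of_real (fps_X / fps_sin 1) oo ?L) * ?D = fps_of_real bernoulli_half_fps * ?D"
    by simp
  moreover have "fps_nth ?D 1 \<noteq> 0" by simp
  hence "?D \<noteq> 0" by force
  ultimately show ?thesis by simp
qed

lemma bernoulli_half_fps_power_nth_even:
  "fps_nth (bernoulli_half_fps ^ \<rho>) (2*n) = (-1)^n / 2^(2*n) * cosec_num \<rho> n"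
proof -
  have "fps_of_real ((fps_X / fps_sin 1) ^ \<rho>) oo (fps_const (\<i>/2) * fps_X)
      = fps_of_real (bernoulli_half_fps ^ \<rho>)"
    by (simp add: fps_of_real_power fps_compose_power[symmetric] cosecant_fps_compose_ii_half)
  hence "(\<i>/2)^(2*n) * of_real (cosec_num \<rho> n) = of_real (fps_nth (bernoulli_half_fps ^ \<rho>) (2*n))"
    unfolding cosec_num_def by (metis fps_nth_compose_linear fps_of_real_nth)
  moreover have "(\<i>/2)^(2*n) = complex_of_real ((-1)^n / 2^(2*n))"
    unfolding power_divide power_mult by simp
  ultimately show ?thesis by (metis of_real_eq_iff of_real_mult)
qed

theorem mainTheorem11:
  fixes v n :: nat
  assumes "v \<ge> 1" and "n \<le> v - 1"
  shows "norlund (2 * v) (2 * n) (real v)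
           = (-1)^n * fact (2 * n) * (Gamma (real (2 * v - 2 * n)) / Gamma (real (2 * v))) * esym_sq v n
       \<and> norlund (2 * v) (2 * n) (real v)
           = (-1)^n * (1 / 2^(2 * n)) * fact (2 * n) * cosec_num (2 * v) n"
proof
  obtain w where v: "v = Suc w" using assms(1) by (cases v) auto
  with assms(2) have n: "2*n \<le> 2*w+1" by simp
  have "Gamma (real (2 * v - 2 * n)) / Gamma (real (2 * v)) = 1 / (real (2*w+1 choose 2*n) * fact (2*n))"
    using Gamma_quotient_conv_binomial[OF n] by (simp add: v)
  moreover have "norlund (2 * v) (2 * n) (real v) = (-1)^n * esym_sq v n / real (2*w+1 choose 2*n)"
    using norlund_central_esym_sq[of n w] assms(2) n by (simp add: v eq_divide_eq mult.commute)
  ultimately show "norlund (2 * v) (2 * n) (real v)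
      = (-1)^n * fact (2 * n) * (Gamma (real (2 * v - 2 * n)) / Gamma (real (2 * v))) * esym_sq v n"
    by simp
  show "norlund (2 * v) (2 * n) (real v)
      = (-1)^n * (1 / 2^(2 * n)) * fact (2 * n) * cosec_num (2 * v) n"
    using norlund_half[of "2 * v" "2 * n"] by (simp add: bernoulli_half_fps_power_nth_even)
qed

end
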